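(* Let $\chi$ be an indecomposable character on $S(2^\infty)$ with GNS triple $(\pi,\mathcal{H},\xi)$. Let $A\subset X$ be nice and $s\in S(2^\infty)$ with $A\subset Fix(s)$. Then $\pi(s)P^A=P^A$.
   Context: Let $X=\{0,1\}^{\mathbb{N}}$; $X_n=\{0,1\}^n$; $S(2^n)$ the group of all bijections of $X_n$, acting on $X$ by $s((x,a))=(s(x),a)$; $S(2^\infty)=\bigcup_n S(2^n)$; $Fix(s)=\{x\in X:s(x)=x\}$. A character on a group $G$ is a function $\chi$ with $\chi(g_1g_2)=\chi(g_2g_1)$, $(\chi(g_ig_j^{-1}))_{i,j}$ positive semidefinite for all finite families, and $\chi(e)=1$; indecomposable means not a nontrivial convex combination of two distinct characters. GNS triple: $\pi$ a unitary representation on $\mathcal{H}$, $\xi$ a unit cyclic vector, $\chi(g)=(\pi(g)\xi,\xi)$. A set $A\subset X$ is nice if $A=C\times X$ for some $k$ and $C\subset X_k$ (sequences whose first $k$ coordinates lie in $C$). For such $A$ and $m>k$, $s^A_m$ fixes $A$ pointwise and flips the $m$-th coordinate of points outside $A$; $P^A$ is the weak operator limit of $\pi(s^A_m)$ as $m\to\infty$. *)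

theory Defs
  imports Complex_Main
begin

type_synonym pt = "nat \<Rightarrow> bool"          (* X = {0,1}^N, coordinates indexed from 0 *)
type_synonym perm = "pt \<Rightarrow> pt"

text \<open>X_n is modelled as bool lists of length n; a point x of X is the pair
 (map x [0..<n], tail).  An element of S(2^n) acts by permuting the first n coordinates block.\<close>

definition in_S2n :: "nat \<Rightarrow> perm \<Rightarrow> bool" where
  "in_S2n n s \<longleftrightarrow>
     (\<exists>\<sigma>. bij_betw \<sigma> {xs :: bool list. length xs = n} {xs. length xs = n} \<and>
          (\<forall>x. s x = (\<lambda>i. if i < n then \<sigma> (map x [0..<n]) ! i else x i)))"

definition S2inf :: "perm set" where
  "S2inf = {s. \<exists>n. in_S2n n s}"

definition Fix :: "perm \<Rightarrow> pt set" where
  "Fix s = {x. s x = x}"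

definition nice :: "pt set \<Rightarrow> bool" where
  "nice A \<longleftrightarrow> (\<exists>k C. C \<subseteq> {xs :: bool list. length xs = k} \<and> A = {x. map x [0..<k] \<in> C})"

text \<open>s^A_m: fixes A pointwise, flips the m-th coordinate (index m-1, 0-based) outside A.\<close>
definition sA :: "pt set \<Rightarrow> nat \<Rightarrow> perm" where
  "sA A m x = (if x \<in> A then x else x((m - 1) := \<not> x (m - 1)))"

definition is_character :: "(perm \<Rightarrow> complex) \<Rightarrow> bool" where
  "is_character \<chi> \<longleftrightarrow>
     (\<forall>g1\<in>S2inf. \<forall>g2\<in>S2inf. \<chi> (g1 \<circ> g2) = \<chi> (g2 \<circ> g1)) \<and>
     (\<forall>n (g :: nat \<Rightarrow> perm) (c :: nat \<Rightarrow> complex). (\<forall>i<n. g i \<in> S2inf) \<longrightarrow>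
        (let q = (\<Sum>i<n. \<Sum>j<n. cnj (c i) * \<chi> (g i \<circ> inv (g j)) * c j)
         in Im q = 0 \<and> Re q \<ge> 0)) \<and>
     \<chi> id = 1"

definition indecomposable_character :: "(perm \<Rightarrow> complex) \<Rightarrow> bool" where
  "indecomposable_character \<chi> \<longleftrightarrow> is_character \<chi> \<and>
     \<not> (\<exists>(t::real) \<chi>1 \<chi>2. 0 < t \<and> t < 1 \<and> is_character \<chi>1 \<and> is_character \<chi>2 \<and>
            (\<exists>g\<in>S2inf. \<chi>1 g \<noteq> \<chi>2 g) \<and>
            (\<forall>g\<in>S2inf. \<chi> g = of_real t * \<chi>1 g + of_real (1 - t) * \<chi>2 g))"

definition hnorm :: "('h \<Rightarrow> 'h \<Rightarrow> complex) \<Rightarrow> 'h \<Rightarrow> real" where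
  "hnorm ip x = sqrt (Re (ip x x))"

definition complex_hilbert :: "(complex \<Rightarrow> 'h::ab_group_add \<Rightarrow> 'h) \<Rightarrow> ('h \<Rightarrow> 'h \<Rightarrow> complex) \<Rightarrow> bool" where
  "complex_hilbert sc ip \<longleftrightarrow>
     Vector_Spaces.vector_space sc \<and>
     (\<forall>x y z. ip (x + y) z = ip x z + ip y z) \<and>
     (\<forall>c x y. ip (sc c x) y = c * ip x y) \<and>
     (\<forall>x y. ip y x = cnj (ip x y)) \<and>
     (\<forall>x. Re (ip x x) \<ge> 0) \<and>
     (\<forall>x. ip x x = 0 \<longrightarrow> x = 0) \<and>
     (\<forall>f :: nat \<Rightarrow> 'h. (\<forall>e>0. \<exists>N. \<forall>m\<ge>N. \<forall>n\<ge>N. hnorm ip (f m - f n) < e) \<longrightarrow>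
        (\<exists>l. (\<lambda>n. hnorm ip (f n - l)) \<longlonglongrightarrow> 0))"

definition unitary_op :: "(complex \<Rightarrow> 'h::ab_group_add \<Rightarrow> 'h) \<Rightarrow> ('h \<Rightarrow> 'h \<Rightarrow> complex) \<Rightarrow> ('h \<Rightarrow> 'h) \<Rightarrow> bool" where
  "unitary_op sc ip U \<longleftrightarrow>
     (\<forall>x y. U (x + y) = U x + U y) \<and> (\<forall>c x. U (sc c x) = sc c (U x)) \<and>
     surj U \<and> (\<forall>x y. ip (U x) (U y) = ip x y)"

definition unitary_rep :: "(complex \<Rightarrow> 'h::ab_group_add \<Rightarrow> 'h) \<Rightarrow> ('h \<Rightarrow> 'h \<Rightarrow> complex) \<Rightarrow> (perm \<Rightarrow> 'h \<Rightarrow> 'h) \<Rightarrow> bool" where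
  "unitary_rep sc ip \<pi> \<longleftrightarrow>
     (\<forall>g\<in>S2inf. unitary_op sc ip (\<pi> g)) \<and>
     (\<forall>g\<in>S2inf. \<forall>h\<in>S2inf. \<pi> (g \<circ> h) = \<pi> g \<circ> \<pi> h) \<and>
     \<pi> id = id"

definition GNS_triple :: "(complex \<Rightarrow> 'h::ab_group_add \<Rightarrow> 'h) \<Rightarrow> ('h \<Rightarrow> 'h \<Rightarrow> complex) \<Rightarrow>
     (perm \<Rightarrow> 'h \<Rightarrow> 'h) \<Rightarrow> 'h \<Rightarrow> (perm \<Rightarrow> complex) \<Rightarrow> bool" where
  "GNS_triple sc ip \<pi> \<xi> \<chi> \<longleftrightarrow>
     complex_hilbert sc ip \<and> unitary_rep sc ip \<pi> \<and>
     ip \<xi> \<xi> = 1 \<and>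
     (\<forall>v. \<forall>e>0. \<exists>n (g :: nat \<Rightarrow> perm) (c :: nat \<Rightarrow> complex). (\<forall>i<n. g i \<in> S2inf) \<and>
        hnorm ip (v - (\<Sum>i<n. sc (c i) (\<pi> (g i) \<xi>))) < e) \<and>
     (\<forall>g\<in>S2inf. \<chi> g = ip (\<pi> g \<xi>) \<xi>)"

definition weak_op_limit :: "('h \<Rightarrow> 'h \<Rightarrow> complex) \<Rightarrow> (nat \<Rightarrow> 'h \<Rightarrow> 'h) \<Rightarrow> ('h \<Rightarrow> 'h) \<Rightarrow> bool" where
  "weak_op_limit ip T P \<longleftrightarrow> (\<forall>u v. (\<lambda>m. ip (T m u) v) \<longlonglongrightarrow> ip (P u) v)"

end

theory Submission
  imports Defs "HOL-Combinatorics.Permutations"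
begin

text \<open>Write g_m = s^A_m and let \<tau> be an involution acting on the first n coordinates and fixing A
  pointwise. For large m, \<tau> commutes with g_m, and for l \<noteq> j the products g_l g_j and
  \<tau> g_l g_j are conjugate, so the character takes the same value on them. Hence for every a the
  vector w = \<pi>(\<tau>)\<pi>(a)\<xi> - \<pi>(a)\<xi> has pairwise orthogonal translates \<pi>(g_m)w of equal
  norm, which forces P^A w = 0 weakly. By cyclicity of \<xi>, P^A \<pi>(\<tau>) = P^A, and as \<pi>(\<tau>)
  commutes with every \<pi>(g_m) also \<pi>(\<tau>) P^A = P^A. Finally, an element of S(2^n) fixing A
  permutes the words of length n that are not prefixes of points of A, so it is a product of
  transpositions of such words, each an involution of the above kind.\<close>

locale complex_hilbert_space =
  fixes sc :: "complex \<Rightarrow> 'h::ab_group_add \<Rightarrow> 'h" and ip :: "'h \<Rightarrow> 'h \<Rightarrow> complex"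
  assumes hilbert: "complex_hilbert sc ip"
begin

lemma ip_add_left: "ip (x + y) z = ip x z + ip y z"
  using hilbert unfolding complex_hilbert_def by blast

lemma ip_scale_left: "ip (sc c x) y = c * ip x y"
  using hilbert unfolding complex_hilbert_def by blast

lemma ip_conj_commute: "ip y x = cnj (ip x y)"
  using hilbert unfolding complex_hilbert_def by blast

lemma ip_self_nonneg: "Re (ip x x) \<ge> 0"
  using hilbert unfolding complex_hilbert_def by blast

lemma ip_self_eq_zeroD: "ip x x = 0 \<Longrightarrow> x = 0"
  using hilbert unfolding complex_hilbert_def by blast

lemma ip_zero_left [simp]: "ip 0 z = 0"
  using ip_add_left[of 0 0 z] by simp

lemma ip_minus_left: "ip (- x) z = - ip x z"
  using ip_add_left[of x "- x" z] by (simp add: eq_neg_iff_add_eq_0 add.commute)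

lemma ip_diff_left: "ip (x - y) z = ip x z - ip y z"
  using ip_add_left[of x "- y" z] ip_minus_left by simp

lemma ip_add_right: "ip z (x + y) = ip z x + ip z y"
  by (metis ip_add_left ip_conj_commute complex_cnj_add)

lemma ip_diff_right: "ip z (x - y) = ip z x - ip z y"
  by (metis ip_diff_left ip_conj_commute complex_cnj_diff)

lemma ip_zero_right [simp]: "ip z 0 = 0"
  by (metis ip_conj_commute ip_zero_left complex_cnj_zero)

lemma ip_scale_right: "ip x (sc c y) = cnj c * ip x y"
  by (metis ip_scale_left ip_conj_commute complex_cnj_mult)

lemma ip_sum_left: "ip (\<Sum>i\<in>I. f i) z = (\<Sum>i\<in>I. ip (f i) z)"
  by (induction I rule: infinite_finite_induct) (auto simp: ip_add_left)

lemma ip_sum_right: "ip z (\<Sum>i\<in>I. f i) = (\<Sum>i\<in>I. ip z (f i))"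
  by (induction I rule: infinite_finite_induct) (auto simp: ip_add_right)

lemma ip_self_real: "ip x x = of_real (Re (ip x x))"
  by (metis ip_conj_commute Reals_cnj_iff of_real_Re)

lemma hnorm_nonneg: "hnorm ip x \<ge> 0"
  using ip_self_nonneg by (simp add: hnorm_def)

lemma ip_left_ext: "(\<And>v. ip x v = ip y v) \<Longrightarrow> x = y"
  using ip_self_eq_zeroD[of "x - y"] ip_diff_left by (simp add: right_minus_eq)

lemma cauchy_schwarz: "(cmod (ip x y))\<^sup>2 \<le> Re (ip x x) * Re (ip y y)"
proof (cases "y = 0")
  case True
  then show ?thesis by simp
next
  case False
  define b where "b = Re (ip y y)"
  have yy: "ip y y = of_real b"
    using ip_self_real b_def by simp
  have "b \<noteq> 0"
    using ip_self_eq_zeroD[of y] False yy by auto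
  then have b_pos: "b > 0"
    using ip_self_nonneg[of y] b_def by simp
  \<comment> \<open>t y is the orthogonal projection of x onto y\<close>
  define t where "t = ip x y / of_real b"
  define q where "q = (cmod (ip x y))\<^sup>2"
  have q: "ip x y * cnj (ip x y) = of_real q"
    using complex_norm_square[of "ip x y"] unfolding q_def by simp
  have "ip (x - sc t y) (x - sc t y) = ip x x - cnj t * ip x y - t * ip y x + t * cnj t * ip y y"
    by (simp add: ip_diff_left ip_diff_right ip_scale_left ip_scale_right algebra_simps)
  also have "\<dots> = ip x x - of_real (q / b)"
    using b_pos by (simp add: t_def yy ip_conj_commute[of y x] q[symmetric] field_simps)
  finally have "0 \<le> Re (ip x x) - q / b"
    using ip_self_nonneg[of "x - sc t y"] by simp
  then show ?thesis
    using b_pos unfolding b_def[symmetric] q_def[symmetric] by (simp add: field_simps)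
qed

lemma cauchy_schwarz_hnorm: "cmod (ip x y) \<le> hnorm ip x * hnorm ip y"
proof -
  have "cmod (ip x y) = sqrt ((cmod (ip x y))\<^sup>2)"
    by simp
  also have "\<dots> \<le> sqrt (Re (ip x x) * Re (ip y y))"
    using cauchy_schwarz real_sqrt_le_mono by blast
  finally show ?thesis
    by (simp add: hnorm_def real_sqrt_mult)
qed

lemma unitary_add: "unitary_op sc ip U \<Longrightarrow> U (x + y) = U x + U y"
  unfolding unitary_op_def by blast

lemma unitary_scale: "unitary_op sc ip U \<Longrightarrow> U (sc c x) = sc c (U x)"
  unfolding unitary_op_def by blast

lemma unitary_ip: "unitary_op sc ip U \<Longrightarrow> ip (U x) (U y) = ip x y"
  unfolding unitary_op_def by blast

lemma unitary_diff:
  assumes "unitary_op sc ip U"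
  shows "U (x - y) = U x - U y"
proof -
  have "U (x - y) + U y = U x"
    using unitary_add[OF assms, of "x - y" y] by simp
  then show ?thesis
    by (simp add: eq_diff_eq)
qed

lemma unitary_hnorm: "unitary_op sc ip U \<Longrightarrow> hnorm ip (U x) = hnorm ip x"
  by (simp add: hnorm_def unitary_ip)

lemma unitary_involution_adjoint:
  assumes "unitary_op sc ip U" and "\<And>x. U (U x) = x"
  shows "ip (U x) y = ip x (U y)"
  using unitary_ip[OF assms(1), of "U x" y] assms(2) by simp

lemma weak_limit_eqI:
  assumes "weak_op_limit ip T P"
    and "\<forall>\<^sub>F m in sequentially. ip (T m x) v = f m" and "f \<longlonglongrightarrow> l"
  shows "ip (P x) v = l"
proof -
  have "(\<lambda>m. ip (T m x) v) \<longlonglongrightarrow> l"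
    using Lim_transform_eventually[OF assms(3)] assms(2) by (simp add: eq_commute)
  then show ?thesis
    using assms(1) LIMSEQ_unique unfolding weak_op_limit_def by blast
qed

context
  fixes T :: "nat \<Rightarrow> 'h \<Rightarrow> 'h" and P :: "'h \<Rightarrow> 'h"
  assumes limit: "weak_op_limit ip T P"
    and eventually_unitary: "\<forall>\<^sub>F m in sequentially. unitary_op sc ip (T m)"
begin

lemma weak_limit_tendsto: "(\<lambda>m. ip (T m x) v) \<longlonglongrightarrow> ip (P x) v"
  using limit unfolding weak_op_limit_def by blast

lemma weak_limit_add: "ip (P (x + y)) v = ip (P x) v + ip (P y) v"
  using eventually_unitary
  by (intro weak_limit_eqI[OF limit _ tendsto_add[OF weak_limit_tendsto weak_limit_tendsto]])
    (auto elim: eventually_mono simp: unitary_add ip_add_left)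

lemma weak_limit_scale: "ip (P (sc c x)) v = c * ip (P x) v"
  using eventually_unitary
  by (intro weak_limit_eqI[OF limit _ tendsto_mult_left[OF weak_limit_tendsto]])
    (auto elim: eventually_mono simp: unitary_scale ip_scale_left)

lemma weak_limit_bound: "cmod (ip (P x) v) \<le> hnorm ip x * hnorm ip v"
proof (rule tendsto_upperbound[OF tendsto_norm[OF weak_limit_tendsto]])
  show "\<forall>\<^sub>F m in sequentially. cmod (ip (T m x) v) \<le> hnorm ip x * hnorm ip v"
    using eventually_unitary
    by (rule eventually_mono) (metis cauchy_schwarz_hnorm unitary_hnorm)
qed simp

lemma weak_limit_commute:
  assumes U: "unitary_op sc ip U" and invol: "\<And>x. U (U x) = x"
    and commute: "\<forall>\<^sub>F m in sequentially. \<forall>x. U (T m x) = T m (U x)"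
  shows "U (P x) = P (U x)"
proof (rule ip_left_ext)
  fix v
  have "ip (P (U x)) v = ip (P x) (U v)"
    using commute
    by (intro weak_limit_eqI[OF limit _ weak_limit_tendsto])
      (auto elim!: eventually_mono simp: unitary_involution_adjoint[OF U invol, symmetric])
  then show "ip (U (P x)) v = ip (P (U x)) v"
    by (simp add: unitary_involution_adjoint[OF U invol])
qed

end

lemma pythagoras:
  assumes "finite I" and orthogonal: "\<And>i j. i \<in> I \<Longrightarrow> j \<in> I \<Longrightarrow> i \<noteq> j \<Longrightarrow> ip (y i) (y j) = 0"
  shows "ip (\<Sum>i\<in>I. y i) (\<Sum>i\<in>I. y i) = (\<Sum>i\<in>I. ip (y i) (y i))"
proof -
  have "(\<Sum>j\<in>I. ip (y j) (y i)) = ip (y i) (y i)" if "i \<in> I" for i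
  proof -
    have "(\<Sum>j\<in>I - {i}. ip (y j) (y i)) = 0"
      using that by (intro sum.neutral) (auto intro: orthogonal)
    then show ?thesis
      using that \<open>finite I\<close> by (simp add: sum.remove[of I i])
  qed
  then show ?thesis
    unfolding ip_sum_left ip_sum_right by (rule sum.cong[OF refl])
qed

lemma orthogonal_sequence_weak_limit_zero:
  assumes orthogonal: "\<And>i j. K \<le> i \<Longrightarrow> K \<le> j \<Longrightarrow> i \<noteq> j \<Longrightarrow> ip (x i) (x j) = 0"
    and bounded: "\<And>i. K \<le> i \<Longrightarrow> Re (ip (x i) (x i)) \<le> B"
    and lim: "(\<lambda>m. ip (x m) v) \<longlonglongrightarrow> r"
  shows "r = 0"
proof -
  define V where "V = Re (ip v v)"
  \<comment> \<open>N consecutive terms sum to a vector of square norm at most N B, whose inner product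
    with v tends to N r\<close>
  have N_bound: "real N * (cmod r)\<^sup>2 \<le> B * V" if "N \<ge> 1" for N :: nat
  proof -
    define S where "S M = (\<Sum>i<N. x (M + i))" for M
    have "(\<lambda>M. (cmod (ip (S M) v))\<^sup>2) \<longlonglongrightarrow> (cmod (\<Sum>i<N. r))\<^sup>2"
      unfolding S_def ip_sum_left
      by (intro tendsto_intros LIMSEQ_ignore_initial_segment[OF lim])
    moreover have "\<forall>\<^sub>F M in sequentially. (cmod (ip (S M) v))\<^sup>2 \<le> real N * B * V"
      unfolding eventually_sequentially
    proof (intro exI allI impI)
      fix M assume "K \<le> M"
      have "ip (S M) (S M) = (\<Sum>i<N. ip (x (M + i)) (x (M + i)))"
        unfolding S_def using \<open>K \<le> M\<close> by (intro pythagoras) (auto intro: orthogonal)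
      then have "Re (ip (S M) (S M)) \<le> real N * B"
        using bounded \<open>K \<le> M\<close> sum_bounded_above[of "{..<N}" "\<lambda>i. Re (ip (x (M + i)) (x (M + i)))" B]
        by simp
      then show "(cmod (ip (S M) v))\<^sup>2 \<le> real N * B * V"
        using cauchy_schwarz[of "S M" v] ip_self_nonneg[of v] unfolding V_def
        by (smt (verit, best) mult_right_mono)
    qed
    ultimately have "(cmod (\<Sum>i<N. r))\<^sup>2 \<le> real N * B * V"
      by (rule tendsto_upperbound) simp
    then have "real N * (real N * (cmod r)\<^sup>2) \<le> real N * (B * V)"
      by (simp add: norm_mult power_mult_distrib power2_eq_square algebra_simps)
    then show ?thesis
      using that by simp
  qed
  show ?thesis
  proof (rule ccontr)
    assume "r \<noteq> 0"
    then have r_pos: "(cmod r)\<^sup>2 > 0"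
      by simp
    obtain N :: nat where N: "max 1 (B * V / (cmod r)\<^sup>2) < real N"
      using reals_Archimedean2 by blast
    then have "B * V < real N * (cmod r)\<^sup>2"
      using r_pos by (simp add: divide_less_eq)
    moreover have "N \<ge> 1"
      using N by simp
    ultimately show False
      using N_bound by fastforce
  qed
qed

lemma functional_vanishing_on_dense_span:
  assumes add: "\<And>x y. \<Phi> (x + y) = \<Phi> x + \<Phi> y"
    and scale: "\<And>c x. \<Phi> (sc c x) = c * \<Phi> x"
    and bounded: "\<And>x. cmod (\<Phi> x) \<le> C * hnorm ip x"
    and vanish: "\<And>y. y \<in> D \<Longrightarrow> \<Phi> y = 0"
    and dense: "\<And>e. e > 0 \<Longrightarrow>
      \<exists>(n::nat) f c. (\<forall>i<n. f i \<in> D) \<and> hnorm ip (u - (\<Sum>i<n. sc (c i) (f i))) < e"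
  shows "\<Phi> u = 0"
proof (rule ccontr)
  assume nonzero: "\<Phi> u \<noteq> 0"
  have diff: "\<Phi> (x - y) = \<Phi> x - \<Phi> y" for x y
    using add[of "x - y" y] by (simp add: eq_diff_eq)
  have sum: "\<Phi> (\<Sum>i\<in>I. g i) = (\<Sum>i\<in>I. \<Phi> (g i))" for I and g :: "nat \<Rightarrow> 'h"
    using diff[of 0 0] by (induction I rule: infinite_finite_induct) (auto simp: add)
  define e where "e = cmod (\<Phi> u) / (2 * (\<bar>C\<bar> + 1))"
  have "e > 0"
    using nonzero by (simp add: e_def add_pos_nonneg)
  then obtain n :: nat and f c where f: "\<forall>i<n. f i \<in> D"
    and close: "hnorm ip (u - (\<Sum>i<n. sc (c i) (f i))) < e"
    using dense[OF \<open>e > 0\<close>] by blast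
  have "\<Phi> (\<Sum>i<n. sc (c i) (f i)) = 0"
    using f vanish by (simp add: sum scale)
  then have "cmod (\<Phi> u) \<le> C * hnorm ip (u - (\<Sum>i<n. sc (c i) (f i)))"
    using bounded[of "u - (\<Sum>i<n. sc (c i) (f i))"] by (simp add: diff)
  also have "\<dots> \<le> \<bar>C\<bar> * e"
    using close hnorm_nonneg
    by (smt (verit, best) abs_ge_self mult_left_mono mult_right_mono)
  also have "\<dots> < cmod (\<Phi> u)"
    using nonzero by (simp add: e_def field_simps add_nonneg_pos)
  finally show False
    by simp
qed

end

abbreviation words :: "nat \<Rightarrow> bool list set" where
  "words n \<equiv> {xs. length xs = n}"

definition prefix_word :: "nat \<Rightarrow> pt \<Rightarrow> bool list" where
  "prefix_word n x = map x [0..<n]"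

definition pad_word :: "bool list \<Rightarrow> pt" where
  "pad_word xs i = (if i < length xs then xs ! i else False)"

definition lift_prefix :: "nat \<Rightarrow> (bool list \<Rightarrow> bool list) \<Rightarrow> perm" where
  "lift_prefix n \<sigma> x = (\<lambda>i. if i < n then \<sigma> (prefix_word n x) ! i else x i)"

definition prefix_local :: "nat \<Rightarrow> perm \<Rightarrow> bool" where
  "prefix_local n s \<longleftrightarrow> (\<forall>x i. n \<le> i \<longrightarrow> s x i = x i) \<and>
     (\<forall>x y. (\<forall>i<n. x i = y i) \<longrightarrow> (\<forall>i<n. s x i = s y i))"

lemma prefix_word_length [simp]: "length (prefix_word n x) = n"
  by (simp add: prefix_word_def)

lemma prefix_word_nth [simp]: "i < n \<Longrightarrow> prefix_word n x ! i = x i"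
  by (simp add: prefix_word_def)

lemma prefix_word_eq_iff: "prefix_word n x = prefix_word n y \<longleftrightarrow> (\<forall>i<n. x i = y i)"
  by (auto simp: prefix_word_def)

lemma prefix_word_pad_word: "length xs = n \<Longrightarrow> prefix_word n (pad_word xs) = xs"
  by (intro nth_equalityI) (simp_all add: pad_word_def)

lemma finite_words: "finite (words n)"
  using finite_lists_length_eq[of "UNIV :: bool set" n] by simp

lemma in_S2n_iff_lift_prefix:
  "in_S2n n s \<longleftrightarrow> (\<exists>\<sigma>. bij_betw \<sigma> (words n) (words n) \<and> s = lift_prefix n \<sigma>)"
  unfolding in_S2n_def lift_prefix_def prefix_word_def fun_eq_iff by simp

lemma prefix_local_lift_prefix: "prefix_local n (lift_prefix n \<sigma>)"
  unfolding prefix_local_def lift_prefix_def by (auto simp: prefix_word_eq_iff[symmetric])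

lemma prefix_word_lift_prefix:
  assumes "\<And>xs. length xs = n \<Longrightarrow> length (\<sigma> xs) = n"
  shows "prefix_word n (lift_prefix n \<sigma> x) = \<sigma> (prefix_word n x)"
  using assms[of "prefix_word n x"] by (intro nth_equalityI) (auto simp: lift_prefix_def)

lemma lift_prefix_comp:
  assumes "\<And>xs. length xs = n \<Longrightarrow> length (\<tau> xs) = n"
  shows "lift_prefix n (\<sigma> \<circ> \<tau>) = lift_prefix n \<sigma> \<circ> lift_prefix n \<tau>"
proof
  fix x
  have "lift_prefix n \<tau> x i = x i" if "n \<le> i" for i
    using that by (simp add: lift_prefix_def)
  then show "lift_prefix n (\<sigma> \<circ> \<tau>) x = (lift_prefix n \<sigma> \<circ> lift_prefix n \<tau>) x"
    using prefix_word_lift_prefix[of n \<tau> x, OF assms]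
    by (auto simp: fun_eq_iff lift_prefix_def[of n \<sigma>] lift_prefix_def[of n "\<sigma> \<circ> \<tau>"])
qed

lemma lift_prefix_cong:
  "(\<And>xs. length xs = n \<Longrightarrow> \<sigma> xs = \<sigma>' xs) \<Longrightarrow> lift_prefix n \<sigma> = lift_prefix n \<sigma>'"
  by (auto simp: fun_eq_iff lift_prefix_def)

lemma lift_prefix_id: "lift_prefix n id = id"
  by (auto simp: fun_eq_iff lift_prefix_def)

lemma in_S2n_inverse:
  assumes "in_S2n n s"
  shows "\<exists>t. in_S2n n t \<and> t \<circ> s = id \<and> s \<circ> t = id"
proof -
  obtain \<sigma> where bij: "bij_betw \<sigma> (words n) (words n)" and s: "s = lift_prefix n \<sigma>"
    using assms in_S2n_iff_lift_prefix by blast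
  define \<sigma>' where "\<sigma>' = inv_into (words n) \<sigma>"
  have bij': "bij_betw \<sigma>' (words n) (words n)"
    unfolding \<sigma>'_def by (rule bij_betw_inv_into[OF bij])
  have length: "length (\<sigma> xs) = n" "length (\<sigma>' xs) = n" if "length xs = n" for xs
    using that bij bij' by (auto simp: bij_betw_def)
  have "lift_prefix n \<sigma>' \<circ> s = lift_prefix n (\<sigma>' \<circ> \<sigma>)"
    unfolding s by (rule lift_prefix_comp[symmetric]) (rule length)
  also have "\<dots> = id"
    using bij lift_prefix_cong[of n "\<sigma>' \<circ> \<sigma>" id]
    by (simp add: \<sigma>'_def bij_betw_inv_into_left lift_prefix_id)
  finally have left: "lift_prefix n \<sigma>' \<circ> s = id" .
  have "s \<circ> lift_prefix n \<sigma>' = lift_prefix n (\<sigma> \<circ> \<sigma>')"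
    unfolding s by (rule lift_prefix_comp[symmetric]) (rule length)
  also have "\<dots> = id"
    using bij lift_prefix_cong[of n "\<sigma> \<circ> \<sigma>'" id]
    by (simp add: \<sigma>'_def bij_betw_inv_into_right lift_prefix_id)
  finally show ?thesis
    using left bij' in_S2n_iff_lift_prefix by blast
qed

lemma prefix_local_inj_imp_in_S2n:
  assumes local: "prefix_local n s" and "inj s"
  shows "in_S2n n s"
proof -
  define \<sigma> where "\<sigma> xs = prefix_word n (s (pad_word xs))" for xs
  have s_eq: "s = lift_prefix n \<sigma>"
  proof
    fix x
    have low: "s (pad_word (prefix_word n x)) i = s x i" if "i < n" for i
      using local that unfolding prefix_local_def by (simp add: pad_word_def)
    have high: "s x i = x i" if "n \<le> i" for i
      using local that unfolding prefix_local_def by blast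
    show "s x = lift_prefix n \<sigma> x"
      using low high by (auto simp: fun_eq_iff lift_prefix_def \<sigma>_def)
  qed
  have "inj_on \<sigma> (words n)"
  proof (rule inj_onI)
    fix xs ys assume xs: "xs \<in> words n" and ys: "ys \<in> words n" and "\<sigma> xs = \<sigma> ys"
    moreover have "prefix_word n (pad_word xs) = xs" "prefix_word n (pad_word ys) = ys"
      using xs ys by (simp_all add: prefix_word_pad_word)
    moreover have "pad_word xs i = pad_word ys i" if "n \<le> i" for i
      using xs ys that by (simp add: pad_word_def)
    ultimately have "lift_prefix n \<sigma> (pad_word xs) = lift_prefix n \<sigma> (pad_word ys)"
      by (simp add: fun_eq_iff lift_prefix_def)
    then have "s (pad_word xs) = s (pad_word ys)"
      by (simp add: s_eq)
    then have "prefix_word n (pad_word xs) = prefix_word n (pad_word ys)"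
      using \<open>inj s\<close> by (simp add: inj_eq)
    then show "xs = ys"
      using xs ys by (simp add: prefix_word_pad_word)
  qed
  moreover have "\<sigma> ` words n \<subseteq> words n"
    by (auto simp: \<sigma>_def)
  ultimately have "bij_betw \<sigma> (words n) (words n)"
    using endo_inj_surj[OF finite_words] by (simp add: bij_betw_def)
  then show ?thesis
    using s_eq in_S2n_iff_lift_prefix by blast
qed

lemma prefix_local_mono:
  assumes local: "prefix_local n s" and "n \<le> m"
  shows "prefix_local m s"
  unfolding prefix_local_def
proof (intro conjI allI impI)
  fix x i
  assume "m \<le> i"
  then show "s x i = x i"
    using local \<open>n \<le> m\<close> unfolding prefix_local_def by simp
next
  fix x y :: pt and i
  assume agree: "\<forall>i<m. x i = y i" and "i < m"
  then have "\<forall>j<n. x j = y j"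
    using \<open>n \<le> m\<close> by simp
  then show "s x i = s y i"
    using local agree \<open>i < m\<close> unfolding prefix_local_def by (cases "i < n") auto
qed

lemma prefix_local_comp: "prefix_local n s \<Longrightarrow> prefix_local n t \<Longrightarrow> prefix_local n (s \<circ> t)"
  unfolding prefix_local_def by simp

lemma S2inf_inverse: "s \<in> S2inf \<Longrightarrow> \<exists>t\<in>S2inf. t \<circ> s = id \<and> s \<circ> t = id"
  unfolding S2inf_def using in_S2n_inverse by blast

lemma left_inverse_imp_inj: "t \<circ> s = id \<Longrightarrow> inj s"
  using inj_on_imageI2[of t s UNIV] by simp

lemma S2inf_imp_prefix_local_inj:
  assumes "s \<in> S2inf"
  shows "\<exists>n. prefix_local n s \<and> inj s"
proof -
  obtain n where "in_S2n n s"
    using assms unfolding S2inf_def by blast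
  then obtain \<sigma> where "s = lift_prefix n \<sigma>"
    using in_S2n_iff_lift_prefix by blast
  moreover obtain t where "t \<circ> s = id"
    using S2inf_inverse[OF assms] by blast
  ultimately show ?thesis
    using prefix_local_lift_prefix left_inverse_imp_inj by blast
qed

lemma prefix_local_inj_imp_S2inf: "prefix_local n s \<Longrightarrow> inj s \<Longrightarrow> s \<in> S2inf"
  unfolding S2inf_def using prefix_local_inj_imp_in_S2n by blast

lemma involution_in_S2inf: "prefix_local n s \<Longrightarrow> s \<circ> s = id \<Longrightarrow> s \<in> S2inf"
  using prefix_local_inj_imp_S2inf left_inverse_imp_inj by blast

lemma S2inf_id: "id \<in> S2inf"
  by (rule involution_in_S2inf[of 0]) (simp_all add: prefix_local_def)

lemma S2inf_comp:
  assumes "s \<in> S2inf" "t \<in> S2inf"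
  shows "s \<circ> t \<in> S2inf"
proof -
  obtain n m where "prefix_local n s" "inj s" "prefix_local m t" "inj t"
    using assms S2inf_imp_prefix_local_inj by blast
  then have "prefix_local (max n m) s" "prefix_local (max n m) t"
    using prefix_local_mono[of n s "max n m"] prefix_local_mono[of m t "max n m"] by simp_all
  then show ?thesis
    using prefix_local_inj_imp_S2inf prefix_local_comp inj_compose \<open>inj s\<close> \<open>inj t\<close>
    by blast
qed

definition prefix_determined :: "nat \<Rightarrow> pt set \<Rightarrow> bool" where
  "prefix_determined k A \<longleftrightarrow> (\<forall>x y. (\<forall>i<k. x i = y i) \<longrightarrow> x \<in> A \<longrightarrow> y \<in> A)"

lemma nice_imp_prefix_determined: "nice A \<Longrightarrow> \<exists>k. prefix_determined k A"
  unfolding nice_def prefix_determined_def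
  by (metis (no_types, lifting) mem_Collect_eq prefix_word_def prefix_word_eq_iff)

lemma prefix_determined_upd:
  assumes "prefix_determined k A" and "k \<le> j"
  shows "x(j := v) \<in> A \<longleftrightarrow> x \<in> A"
  using assms unfolding prefix_determined_def by (metis fun_upd_other not_le)

lemma sA_involution:
  assumes "prefix_determined k A" and "k < m"
  shows "sA A m \<circ> sA A m = id"
proof
  fix x
  show "(sA A m \<circ> sA A m) x = id x"
    using prefix_determined_upd[OF assms(1), of "m - 1" x] assms(2) by (simp add: sA_def)
qed

lemma sA_prefix_local:
  assumes "prefix_determined k A" and "k < m"
  shows "prefix_local m (sA A m)"
  unfolding prefix_local_def
proof (intro conjI allI impI)
  fix x i
  assume "m \<le> i"
  then show "sA A m x i = x i"
    using assms(2) by (auto simp: sA_def)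
next
  fix x y :: pt and i
  assume agree: "\<forall>i<m. x i = y i" and "i < m"
  then have "x \<in> A \<longleftrightarrow> y \<in> A"
    using assms unfolding prefix_determined_def by (metis less_trans)
  then show "sA A m x i = sA A m y i"
    using agree \<open>i < m\<close> by (simp add: sA_def)
qed

lemma sA_in_S2inf: "prefix_determined k A \<Longrightarrow> k < m \<Longrightarrow> sA A m \<in> S2inf"
  using involution_in_S2inf sA_prefix_local sA_involution by blast

lemma prefix_local_upd:
  assumes "prefix_local n \<tau>" and "n \<le> j"
  shows "\<tau> (x(j := v)) = (\<tau> x)(j := v)"
proof
  fix i
  show "\<tau> (x(j := v)) i = ((\<tau> x)(j := v)) i"
    using assms unfolding prefix_local_def
    by (cases "i < n") (auto simp: not_less intro!: spec[of _ "x(j := v)"])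
qed

definition fixing_involution :: "nat \<Rightarrow> pt set \<Rightarrow> perm \<Rightarrow> bool" where
  "fixing_involution n A \<tau> \<longleftrightarrow> prefix_local n \<tau> \<and> \<tau> \<circ> \<tau> = id \<and> (\<forall>x\<in>A. \<tau> x = x)"

lemma fixing_involution_in_S2inf: "fixing_involution n A \<tau> \<Longrightarrow> \<tau> \<in> S2inf"
  unfolding fixing_involution_def using involution_in_S2inf by blast

lemma fixing_involution_high: "fixing_involution n A \<tau> \<Longrightarrow> n \<le> i \<Longrightarrow> \<tau> x i = x i"
  unfolding fixing_involution_def prefix_local_def by blast

lemma fixing_involution_apply_twice: "fixing_involution n A \<tau> \<Longrightarrow> \<tau> (\<tau> x) = x"
  unfolding fixing_involution_def by (metis comp_apply id_apply)

lemma fixing_involution_outside: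
  "fixing_involution n A \<tau> \<Longrightarrow> x \<notin> A \<Longrightarrow> \<tau> x \<notin> A"
  by (metis fixing_involution_apply_twice fixing_involution_def)

lemma fixing_involution_commute_sA:
  assumes \<tau>: "fixing_involution n A \<tau>" and "n < m"
  shows "\<tau> (sA A m x) = sA A m (\<tau> x)"
proof (cases "x \<in> A")
  case True
  then show ?thesis
    using \<tau> by (simp add: sA_def fixing_involution_def)
next
  case False
  have "\<tau> x (m - 1) = x (m - 1)"
    using fixing_involution_high[OF \<tau>] \<open>n < m\<close> by simp
  then show ?thesis
    using False fixing_involution_outside[OF \<tau> False] prefix_local_upd[of n \<tau> "m - 1"] \<tau> \<open>n < m\<close>
    by (simp add: sA_def fixing_involution_def)
qed

text \<open>Outside A the product of the flips at l and j toggles coordinate l - 1, so twisting by \<tau>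
  exactly the points where that coordinate is set moves \<tau> across the product.\<close>

definition twist :: "nat \<Rightarrow> perm \<Rightarrow> perm" where
  "twist l \<tau> x = (if x (l - 1) then \<tau> x else x)"

lemma twist_involution:
  assumes \<tau>: "fixing_involution n A \<tau>" and "n < l"
  shows "twist l \<tau> \<circ> twist l \<tau> = id"
  using fixing_involution_high[OF \<tau>, of "l - 1"] fixing_involution_apply_twice[OF \<tau>] \<open>n < l\<close>
  by (auto simp: fun_eq_iff twist_def)

lemma twist_prefix_local:
  assumes \<tau>: "fixing_involution n A \<tau>" and "n < l"
  shows "prefix_local l (twist l \<tau>)"
  unfolding prefix_local_def
proof (intro conjI allI impI)
  fix x i
  assume "l \<le> i"
  then show "twist l \<tau> x i = x i"
    using fixing_involution_high[OF \<tau>] \<open>n < l\<close> by (simp add: twist_def)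
next
  fix x y :: pt and i
  assume agree: "\<forall>i<l. x i = y i" and "i < l"
  have "prefix_local l \<tau>"
    using \<tau> prefix_local_mono[of n \<tau> l] \<open>n < l\<close> unfolding fixing_involution_def by simp
  then have "x (l - 1) = y (l - 1)" "\<tau> x i = \<tau> y i"
    using agree \<open>i < l\<close> \<open>n < l\<close> unfolding prefix_local_def by simp_all
  then show "twist l \<tau> x i = twist l \<tau> y i"
    using agree \<open>i < l\<close> by (simp add: twist_def)
qed

lemma twist_conjugate_flips:
  assumes A: "prefix_determined k A" and \<tau>: "fixing_involution n A \<tau>"
    and "k < l" "k < j" "n < l" "n < j" "l \<noteq> j"
  shows "twist l \<tau> \<circ> (sA A l \<circ> sA A j) \<circ> twist l \<tau> = \<tau> \<circ> (sA A l \<circ> sA A j)"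
proof -
  define G where "G = sA A l \<circ> sA A j"
  have "twist l \<tau> (G (twist l \<tau> x)) = \<tau> (G x)" for x
  proof (cases "x \<in> A")
    case True
    then show ?thesis
      using \<tau> by (simp add: twist_def G_def sA_def fixing_involution_def)
  next
    case False
    have flip: "G y (l - 1) = (\<not> y (l - 1))" if "y \<notin> A" for y
      using that prefix_determined_upd[OF A, of "j - 1" y] assms(3-7) by (simp add: G_def sA_def)
    have "G (\<tau> x) = \<tau> (G x)"
      using fixing_involution_commute_sA[OF \<tau>] assms(5,6) by (simp add: G_def)
    moreover have "\<tau> x (l - 1) = x (l - 1)"
      using fixing_involution_high[OF \<tau>] \<open>n < l\<close> by simp
    ultimately show ?thesis
      using flip[OF False] flip[OF fixing_involution_outside[OF \<tau> False]]
      by (cases "x (l - 1)") (simp_all add: twist_def)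
  qed
  then show ?thesis
    unfolding G_def[symmetric] by (simp add: fun_eq_iff)
qed

lemma lift_prefix_fixes_iff:
  assumes "\<And>xs. length xs = n \<Longrightarrow> length (\<sigma> xs) = n"
  shows "lift_prefix n \<sigma> x = x \<longleftrightarrow> \<sigma> (prefix_word n x) = prefix_word n x"
proof
  assume "lift_prefix n \<sigma> x = x"
  then show "\<sigma> (prefix_word n x) = prefix_word n x"
    using prefix_word_lift_prefix[of n \<sigma> x, OF assms] by metis
next
  assume "\<sigma> (prefix_word n x) = prefix_word n x"
  then show "lift_prefix n \<sigma> x = x"
    by (auto simp: fun_eq_iff lift_prefix_def)
qed

lemma transposition_fixing_involution:
  assumes "length a = n" "length b = n" "a \<notin> prefix_word n ` A" "b \<notin> prefix_word n ` A"
  shows "fixing_involution n A (lift_prefix n (transpose a b))"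
proof -
  have length: "length (transpose a b xs) = n" if "length xs = n" for xs
    using assms that by (simp add: transpose_def)
  have "lift_prefix n (transpose a b) \<circ> lift_prefix n (transpose a b) = id"
    using lift_prefix_comp[of n "transpose a b" "transpose a b", OF length] lift_prefix_id by simp
  moreover have "lift_prefix n (transpose a b) x = x" if "x \<in> A" for x
  proof -
    have "prefix_word n x \<noteq> a" "prefix_word n x \<noteq> b"
      using assms(3,4) that by auto
    then show ?thesis
      using lift_prefix_fixes_iff[OF length] by simp
  qed
  ultimately show ?thesis
    unfolding fixing_involution_def using prefix_local_lift_prefix by blast
qed

lemma bij_betw_fixing_restrict_permutes:
  assumes bij: "bij_betw \<sigma> W W" and "finite W" and "F \<subseteq> W" and fixed: "\<And>w. w \<in> F \<Longrightarrow> \<sigma> w = w"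
  shows "(\<lambda>w. if w \<in> W then \<sigma> w else w) permutes (W - F)"
proof (rule bij_imp_permutes)
  let ?\<sigma> = "\<lambda>w. if w \<in> W then \<sigma> w else w"
  have inj: "inj_on \<sigma> W"
    using bij by (simp add: bij_betw_def)
  have "inj_on ?\<sigma> (W - F)"
    using inj by (auto simp: inj_on_def)
  moreover have "?\<sigma> ` (W - F) \<subseteq> W - F"
  proof
    fix v
    assume "v \<in> ?\<sigma> ` (W - F)"
    then obtain w where w: "w \<in> W" "w \<notin> F" "v = \<sigma> w"
      by auto
    have "v \<notin> F"
      using w fixed inj \<open>F \<subseteq> W\<close> by (metis inj_on_eq_iff subsetD)
    then show "v \<in> W - F"
      using w bij by (auto simp: bij_betw_def)
  qed
  moreover have "finite (W - F)"
    using \<open>finite W\<close> by simp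
  ultimately show "bij_betw ?\<sigma> (W - F) (W - F)"
    unfolding bij_betw_def using endo_inj_surj by blast
  show "?\<sigma> w = w" if "w \<notin> W - F" for w
    using that fixed by auto
qed

lemma S2inf_fixing_lift_permutes:
  assumes "s \<in> S2inf" and "A \<subseteq> Fix s"
  shows "\<exists>n \<sigma>. \<sigma> permutes (words n - prefix_word n ` A) \<and> s = lift_prefix n \<sigma>"
proof -
  obtain n \<sigma> where bij: "bij_betw \<sigma> (words n) (words n)" and s: "s = lift_prefix n \<sigma>"
    using assms(1) in_S2n_iff_lift_prefix unfolding S2inf_def by blast
  define \<sigma>' where "\<sigma>' xs = (if xs \<in> words n then \<sigma> xs else xs)" for xs
  have "\<sigma> w = w" if "w \<in> prefix_word n ` A" for w
    using that assms(2) bij lift_prefix_fixes_iff[of n \<sigma>]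
    by (auto simp: s Fix_def bij_betw_def)
  then have "\<sigma>' permutes (words n - prefix_word n ` A)"
    unfolding \<sigma>'_def using bij finite_words
    by (intro bij_betw_fixing_restrict_permutes) auto
  moreover have "s = lift_prefix n \<sigma>'"
    unfolding s \<sigma>'_def by (rule lift_prefix_cong) simp
  ultimately show ?thesis
    by blast
qed

locale character_representation = complex_hilbert_space sc ip
  for sc :: "complex \<Rightarrow> 'h::ab_group_add \<Rightarrow> 'h" and ip +
  fixes \<pi> :: "perm \<Rightarrow> 'h \<Rightarrow> 'h" and \<xi> :: 'h and \<chi> :: "perm \<Rightarrow> complex"
  assumes GNS: "GNS_triple sc ip \<pi> \<xi> \<chi>" and character: "is_character \<chi>"
begin

lemma rep_unitary: "g \<in> S2inf \<Longrightarrow> unitary_op sc ip (\<pi> g)"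
  using GNS unfolding GNS_triple_def unitary_rep_def by blast

lemma rep_comp: "g \<in> S2inf \<Longrightarrow> h \<in> S2inf \<Longrightarrow> \<pi> (g \<circ> h) x = \<pi> g (\<pi> h x)"
  using GNS unfolding GNS_triple_def unitary_rep_def by simp

lemma rep_id: "\<pi> id x = x"
  using GNS unfolding GNS_triple_def unitary_rep_def by simp

lemma rep_cyclic:
  assumes "e > 0"
  shows "\<exists>(n::nat) f c. (\<forall>i<n. f i \<in> (\<lambda>g. \<pi> g \<xi>) ` S2inf) \<and>
    hnorm ip (v - (\<Sum>i<n. sc (c i) (f i))) < e"
proof -
  obtain n :: nat and g c where "\<forall>i<n. g i \<in> S2inf"
    and "hnorm ip (v - (\<Sum>i<n. sc (c i) (\<pi> (g i) \<xi>))) < e"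
    using GNS assms unfolding GNS_triple_def by blast
  then show ?thesis
    by (intro exI[of _ n] exI[of _ "\<lambda>i. \<pi> (g i) \<xi>"] exI[of _ c]) auto
qed

lemma character_eq: "g \<in> S2inf \<Longrightarrow> \<chi> g = ip (\<pi> g \<xi>) \<xi>"
  using GNS unfolding GNS_triple_def by blast

lemma character_commute: "g \<in> S2inf \<Longrightarrow> h \<in> S2inf \<Longrightarrow> \<chi> (g \<circ> h) = \<chi> (h \<circ> g)"
  using character unfolding is_character_def by blast

lemma rep_involution: "g \<in> S2inf \<Longrightarrow> g \<circ> g = id \<Longrightarrow> \<pi> g (\<pi> g x) = x"
  using rep_comp[of g g x] rep_id by simp

lemma character_conjugate:
  assumes "d \<in> S2inf" "g \<in> S2inf" "d \<circ> d = id"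
  shows "\<chi> (d \<circ> g \<circ> d) = \<chi> g"
  using character_commute[of d "g \<circ> d"] assms S2inf_comp by (simp add: comp_assoc)

lemma ip_translate_character:
  assumes X: "X \<in> S2inf" and y: "y \<in> S2inf"
  shows "ip (\<pi> (X \<circ> y) \<xi>) (\<pi> y \<xi>) = \<chi> X"
proof -
  obtain t where t: "t \<in> S2inf" "t \<circ> y = id" "y \<circ> t = id"
    using S2inf_inverse[OF y] by blast
  have "ip (\<pi> (X \<circ> y) \<xi>) (\<pi> y \<xi>) = ip (\<pi> t (\<pi> (X \<circ> y) \<xi>)) (\<pi> t (\<pi> y \<xi>))"
    using unitary_ip[OF rep_unitary[OF t(1)]] by simp
  also have "\<dots> = \<chi> (t \<circ> (X \<circ> y))"
    using t X y S2inf_comp by (simp add: rep_comp[symmetric] rep_id character_eq)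
  also have "\<dots> = \<chi> ((X \<circ> y) \<circ> t)"
    using character_commute[of t "X \<circ> y"] t X y S2inf_comp by simp
  also have "(X \<circ> y) \<circ> t = X"
    using t by (simp add: comp_assoc)
  finally show ?thesis .
qed

lemma twisted_vector_orthogonal:
  assumes G: "G \<in> S2inf" and \<tau>: "\<tau> \<in> S2inf" and a: "a \<in> S2inf"
    and involution: "\<tau> \<circ> \<tau> = id" and commute: "\<tau> \<circ> G = G \<circ> \<tau>"
    and invariant: "\<chi> (\<tau> \<circ> G) = \<chi> G"
  defines "w \<equiv> \<pi> \<tau> (\<pi> a \<xi>) - \<pi> a \<xi>"
  shows "ip (\<pi> G w) w = 0"
proof -
  have \<tau>a: "\<tau> \<circ> a \<in> S2inf" and Ga: "G \<circ> a \<in> S2inf" and G\<tau>: "G \<circ> \<tau> \<in> S2inf"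
    using S2inf_comp assms by auto
  have w: "w = \<pi> (\<tau> \<circ> a) \<xi> - \<pi> a \<xi>"
    unfolding w_def using rep_comp \<tau> a by simp
  have Gw: "\<pi> G w = \<pi> (G \<circ> (\<tau> \<circ> a)) \<xi> - \<pi> (G \<circ> a) \<xi>"
    unfolding w using unitary_diff[OF rep_unitary[OF G]] rep_comp G \<tau>a a by simp
  have "G \<circ> a = (\<tau> \<circ> G) \<circ> (\<tau> \<circ> a)"
    using involution commute by (metis comp_assoc comp_id)
  then have "ip (\<pi> (G \<circ> a) \<xi>) (\<pi> (\<tau> \<circ> a) \<xi>) = \<chi> G"
    using ip_translate_character[OF _ \<tau>a] S2inf_comp[OF \<tau> G] invariant by simp
  moreover have "ip (\<pi> (G \<circ> (\<tau> \<circ> a)) \<xi>) (\<pi> a \<xi>) = \<chi> G"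
    using ip_translate_character[OF G\<tau> a] commute invariant by (simp add: comp_assoc)
  moreover have "ip (\<pi> (G \<circ> (\<tau> \<circ> a)) \<xi>) (\<pi> (\<tau> \<circ> a) \<xi>) = \<chi> G"
    using ip_translate_character[OF G \<tau>a] .
  moreover have "ip (\<pi> (G \<circ> a) \<xi>) (\<pi> a \<xi>) = \<chi> G"
    using ip_translate_character[OF G a] .
  ultimately show ?thesis
    unfolding Gw by (subst w) (simp add: ip_diff_left ip_diff_right)
qed

end

locale flip_limit = character_representation sc ip \<pi> \<xi> \<chi>
  for sc :: "complex \<Rightarrow> 'h::ab_group_add \<Rightarrow> 'h" and ip \<pi> \<xi> \<chi> +
  fixes A :: "pt set" and k :: nat and P :: "'h \<Rightarrow> 'h"
  assumes A_prefix_determined: "prefix_determined k A"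
    and limit: "weak_op_limit ip (\<lambda>m. \<pi> (sA A m)) P"
begin

lemma eventually_unitary: "\<forall>\<^sub>F m in sequentially. unitary_op sc ip (\<pi> (sA A m))"
  using eventually_gt_at_top[of k]
  by (rule eventually_mono) (rule rep_unitary[OF sA_in_S2inf[OF A_prefix_determined]])

lemmas P_add = weak_limit_add[OF limit eventually_unitary]
  and P_scale = weak_limit_scale[OF limit eventually_unitary]
  and P_bound = weak_limit_bound[OF limit eventually_unitary]
  and P_commute = weak_limit_commute[OF limit eventually_unitary]

lemma twisted_vector_limit_zero:
  assumes \<tau>: "fixing_involution n A \<tau>" and a: "a \<in> S2inf"
  shows "ip (P (\<pi> \<tau> (\<pi> a \<xi>) - \<pi> a \<xi>)) v = 0"
proof -
  define w where "w = \<pi> \<tau> (\<pi> a \<xi>) - \<pi> a \<xi>"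
  define K where "K = Suc (max n k)"
  have flip: "sA A m \<in> S2inf" "sA A m \<circ> sA A m = id" if "K \<le> m" for m
    using that sA_in_S2inf sA_involution A_prefix_determined unfolding K_def by auto
  have "ip (\<pi> (sA A i) w) (\<pi> (sA A j) w) = 0" if "K \<le> i" "K \<le> j" "i \<noteq> j" for i j
  proof -
    define G where "G = sA A j \<circ> sA A i"
    have G: "G \<in> S2inf"
      using flip that S2inf_comp unfolding G_def by auto
    have "n < i" "n < j" "k < i" "k < j"
      using that unfolding K_def by auto
    then have commute: "\<tau> \<circ> G = G \<circ> \<tau>"
      by (simp add: fun_eq_iff G_def fixing_involution_commute_sA[OF \<tau>])
    have "twist j \<tau> \<in> S2inf" "twist j \<tau> \<circ> twist j \<tau> = id"
      using involution_in_S2inf twist_prefix_local twist_involution \<tau> \<open>n < j\<close> by blast+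
    then have "\<chi> (\<tau> \<circ> G) = \<chi> G"
      using character_conjugate[OF _ G] twist_conjugate_flips[OF A_prefix_determined \<tau>, of j i]
        \<open>i \<noteq> j\<close> \<open>n < i\<close> \<open>n < j\<close> \<open>k < i\<close> \<open>k < j\<close>
      unfolding G_def by metis
    then have "ip (\<pi> G w) w = 0"
      using twisted_vector_orthogonal[OF G fixing_involution_in_S2inf[OF \<tau>] a _ commute] \<tau>
      unfolding w_def fixing_involution_def by blast
    moreover have "ip (\<pi> (sA A i) w) (\<pi> (sA A j) w) = ip (\<pi> (sA A j) (\<pi> (sA A i) w)) w"
      using unitary_involution_adjoint[OF rep_unitary rep_involution[OF flip], of j]
        flip(1) \<open>K \<le> j\<close> by simp
    ultimately show ?thesis
      using flip(1) that by (simp add: G_def rep_comp)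
  qed
  moreover have "Re (ip (\<pi> (sA A i) w) (\<pi> (sA A i) w)) \<le> Re (ip w w)" if "K \<le> i" for i
    using unitary_ip[OF rep_unitary] flip that by simp
  moreover have "(\<lambda>m. ip (\<pi> (sA A m) w) v) \<longlonglongrightarrow> ip (P w) v"
    using limit unfolding weak_op_limit_def by blast
  ultimately show ?thesis
    unfolding w_def[symmetric] by (rule orthogonal_sequence_weak_limit_zero)
qed

lemma P_twist_invariant:
  assumes \<tau>: "fixing_involution n A \<tau>"
  shows "P (\<pi> \<tau> u) = P u"
proof (rule ip_left_ext)
  fix v
  have U: "unitary_op sc ip (\<pi> \<tau>)"
    using rep_unitary fixing_involution_in_S2inf[OF \<tau>] by blast
  have "ip (P (\<pi> \<tau> u)) v - ip (P u) v = 0"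
  proof (rule functional_vanishing_on_dense_span[where \<Phi> = "\<lambda>x. ip (P (\<pi> \<tau> x)) v - ip (P x) v"
        and D = "(\<lambda>a. \<pi> a \<xi>) ` S2inf"])
    show "ip (P (\<pi> \<tau> (x + y))) v - ip (P (x + y)) v =
        (ip (P (\<pi> \<tau> x)) v - ip (P x) v) + (ip (P (\<pi> \<tau> y)) v - ip (P y) v)" for x y
      by (simp add: unitary_add[OF U] P_add)
    show "ip (P (\<pi> \<tau> (sc c x))) v - ip (P (sc c x)) v = c * (ip (P (\<pi> \<tau> x)) v - ip (P x) v)" for c x
      by (simp add: unitary_scale[OF U] P_scale algebra_simps)
    show "cmod (ip (P (\<pi> \<tau> x)) v - ip (P x) v) \<le> (2 * hnorm ip v) * hnorm ip x" for x
      using norm_triangle_ineq4[of "ip (P (\<pi> \<tau> x)) v" "ip (P x) v"]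
        P_bound[of "\<pi> \<tau> x" v] P_bound[of x v] unitary_hnorm[OF U, of x]
      by (simp add: algebra_simps)
    show "ip (P (\<pi> \<tau> y)) v - ip (P y) v = 0" if "y \<in> (\<lambda>a. \<pi> a \<xi>) ` S2inf" for y
      using that twisted_vector_limit_zero[OF \<tau>] P_add[of "\<pi> \<tau> y - y" y v] by auto
  qed (rule rep_cyclic)
  then show "ip (P (\<pi> \<tau> u)) v = ip (P u) v"
    by simp
qed

lemma fixing_involution_commute_P:
  assumes \<tau>: "fixing_involution n A \<tau>"
  shows "\<pi> \<tau> (P u) = P (\<pi> \<tau> u)"
proof (rule P_commute)
  show "unitary_op sc ip (\<pi> \<tau>)" "\<pi> \<tau> (\<pi> \<tau> x) = x" for x
    using rep_unitary rep_involution fixing_involution_in_S2inf[OF \<tau>] \<tau>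
    unfolding fixing_involution_def by blast+
  show "\<forall>\<^sub>F m in sequentially. \<forall>x. \<pi> \<tau> (\<pi> (sA A m) x) = \<pi> (sA A m) (\<pi> \<tau> x)"
    using eventually_gt_at_top[of "max n k"]
  proof (rule eventually_mono, intro allI)
    fix m x
    assume "max n k < m"
    then have "\<tau> \<circ> sA A m = sA A m \<circ> \<tau>" "sA A m \<in> S2inf"
      using fixing_involution_commute_sA[OF \<tau>] sA_in_S2inf[OF A_prefix_determined]
      by (auto simp: fun_eq_iff)
    then show "\<pi> \<tau> (\<pi> (sA A m) x) = \<pi> (sA A m) (\<pi> \<tau> x)"
      using rep_comp fixing_involution_in_S2inf[OF \<tau>] by metis
  qed
qed

lemma fixing_involution_invariance: "fixing_involution n A \<tau> \<Longrightarrow> \<pi> \<tau> (P u) = P u"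
  using fixing_involution_commute_P P_twist_invariant by simp

lemma permutation_invariance:
  assumes "\<sigma> permutes (words n - prefix_word n ` A)"
  shows "lift_prefix n \<sigma> \<in> S2inf \<and> (\<forall>u. \<pi> (lift_prefix n \<sigma>) (P u) = P u)"
  using assms finite_Diff[OF finite_words]
proof (induction rule: permutes_induct)
  case id
  show ?case
    unfolding lift_prefix_id using S2inf_id rep_id by (simp add: id_def)
next
  case (swap a b p)
  have length: "length (p xs) = n" if "length xs = n" for xs
    using swap.hyps(4) that permutes_in_image[OF swap.hyps(4), of xs] permutes_not_in[OF swap.hyps(4)]
    by (cases "xs \<in> words n - prefix_word n ` A") auto
  define \<tau> where "\<tau> = lift_prefix n (transpose a b)"
  have \<tau>: "fixing_involution n A \<tau>"
    unfolding \<tau>_def using swap.hyps(1,2) by (intro transposition_fixing_involution) auto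
  have "lift_prefix n (transpose a b \<circ> p) = \<tau> \<circ> lift_prefix n p"
    unfolding \<tau>_def by (rule lift_prefix_comp) (rule length)
  moreover have "\<tau> \<circ> lift_prefix n p \<in> S2inf"
    using swap.IH S2inf_comp fixing_involution_in_S2inf[OF \<tau>] by blast
  moreover have "\<pi> (\<tau> \<circ> lift_prefix n p) (P u) = P u" for u
    using swap.IH fixing_involution_in_S2inf[OF \<tau>] fixing_involution_invariance[OF \<tau>]
    by (simp add: rep_comp)
  ultimately show ?case
    by (simp add: comp_def)
qed

lemma S2inf_fixing_invariance:
  assumes "s \<in> S2inf" and "A \<subseteq> Fix s"
  shows "\<pi> s \<circ> P = P"
  using S2inf_fixing_lift_permutes[OF assms] permutation_invariance by fastforce

end

theorem mainTheorem6:
  fixes sc :: "complex \<Rightarrow> 'h::ab_group_add \<Rightarrow> 'h"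
    and ip :: "'h \<Rightarrow> 'h \<Rightarrow> complex"
    and \<pi> :: "perm \<Rightarrow> 'h \<Rightarrow> 'h"
    and \<xi> :: 'h and \<chi> :: "perm \<Rightarrow> complex"
    and A :: "pt set" and s :: perm and PA :: "'h \<Rightarrow> 'h"
  assumes "indecomposable_character \<chi>"
    and "GNS_triple sc ip \<pi> \<xi> \<chi>"
    and "nice A"
    and "s \<in> S2inf"
    and "A \<subseteq> Fix s"
    and "weak_op_limit ip (\<lambda>m. \<pi> (sA A m)) PA"
  shows "\<pi> s \<circ> PA = PA"
proof -
  obtain k where "prefix_determined k A"
    using nice_imp_prefix_determined[OF assms(3)] by blast
  moreover have "complex_hilbert sc ip" and "is_character \<chi>"
    using assms(1,2) unfolding GNS_triple_def indecomposable_character_def by blast+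
  ultimately interpret flip_limit sc ip \<pi> \<xi> \<chi> A k PA
    using assms(2,6) by unfold_locales
  show ?thesis
    using S2inf_fixing_invariance assms(4,5) .
qed

end
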